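(* There exist an instance domain $\mathcal{X}$ and a hypothesis class $\mathcal{H}$ consisting of a single hypothesis such that the following holds for all integers $k,l\ge 0$: if $k<l$, then for any integer $m\ge 0$ there exists a strategy of the adversary, all of whose presented sequences satisfy the $l$-bias assumption with respect to $\mathcal{H}$, that forces any deterministic learning algorithm guaranteeing at most $k$ mistakes (on all sequences satisfying the $l$-bias assumption with respect to $\mathcal{H}$) to have at least $m+1$ nontrivial rounds.
   Context: Online classification with abstention: at each round $t$ the adversary presents $x_t\in\mathcal{X}$, the learner predicts $\hat y_t\in\{-1,+1,\bot\}$ ($\bot$ = abstain), then the adversary reveals $y_t\in\{-1,+1\}$. A mistake is a round with $\hat y_t=-y_t$; a round is nontrivial if the learner makes a mistake or abstains on it. A deterministic learner's prediction is a deterministic function of the past labeled examples and the current example; the adversary may choose examples and labels adaptively. Hypotheses are maps $\mathcal{X}\to\{-1,+1\}$. For hypotheses $h_1,h_2$, $h_1\cdot h_2$ is the pointwise product, and for classes $\mathcal{H}_1\cdot\mathcal{H}_2=\{h_1\cdot h_2:h_i\in\mathcal{H}_i\}$. $\mathcal{C}^l$ is the class of functions $x\mapsto 1-2I(x\in D)$ for subsets $D\subseteq\mathcal{X}$ with $|D|\le l$, and $\mathcal{H}^l=\mathcal{H}\cdot\mathcal{C}^l$. A sequence $(x_1,y_1),\dots,(x_n,y_n)$ satisfies the $l$-bias assumption with respect to $\mathcal{H}$ if some $h\in\mathcal{H}^l$ has $h(x_t)=y_t$ for all $t$. An algorithm guarantees at most $k$ mistakes if on every admissible sequence it makes at most $k$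 mistakes. *)

theory Defs
  imports Main
begin

text \<open>Labels are the integers -1 and +1; a prediction is Some 1, Some (-1), or None (abstain).
Hypotheses are int-valued maps on the instance type (only values on the domain X matter).\<close>

type_synonym 'x learner = "('x \<times> int) list \<Rightarrow> 'x \<Rightarrow> int option"
type_synonym 'x history = "('x \<times> int option \<times> int) list"

definition hyp_prod :: "('x \<Rightarrow> int) \<Rightarrow> ('x \<Rightarrow> int) \<Rightarrow> ('x \<Rightarrow> int)" where
  "hyp_prod h1 h2 = (\<lambda>x. h1 x * h2 x)"

definition class_prod :: "('x \<Rightarrow> int) set \<Rightarrow> ('x \<Rightarrow> int) set \<Rightarrow> ('x \<Rightarrow> int) set" where
  "class_prod H1 H2 = {hyp_prod h1 h2 | h1 h2. h1 \<in> H1 \<and> h2 \<in> H2}"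

definition corr_class :: "'x set \<Rightarrow> nat \<Rightarrow> ('x \<Rightarrow> int) set" where
  "corr_class X l = {(\<lambda>x. 1 - 2 * (if x \<in> D then 1 else 0)) | D. D \<subseteq> X \<and> finite D \<and> card D \<le> l}"

definition biased_class :: "'x set \<Rightarrow> ('x \<Rightarrow> int) set \<Rightarrow> nat \<Rightarrow> ('x \<Rightarrow> int) set" where
  "biased_class X H l = class_prod H (corr_class X l)"

definition l_bias :: "'x set \<Rightarrow> ('x \<Rightarrow> int) set \<Rightarrow> nat \<Rightarrow> ('x \<times> int) list \<Rightarrow> bool" where
  "l_bias X H l S \<longleftrightarrow> (\<exists>h \<in> biased_class X H l. \<forall>t < length S. h (fst (S ! t)) = snd (S ! t))"

definition valid_seq :: "'x set \<Rightarrow> ('x \<times> int) list \<Rightarrow> bool" where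
  "valid_seq X S \<longleftrightarrow> set S \<subseteq> X \<times> {-1, 1}"

definition valid_learner :: "'x learner \<Rightarrow> bool" where
  "valid_learner L \<longleftrightarrow> (\<forall>S x. L S x \<in> {None, Some 1, Some (-1)})"

definition mistakes :: "'x learner \<Rightarrow> ('x \<times> int) list \<Rightarrow> nat" where
  "mistakes L S = card {t. t < length S \<and> L (take t S) (fst (S ! t)) = Some (- snd (S ! t))}"

definition guarantees_mistakes :: "'x set \<Rightarrow> ('x \<Rightarrow> int) set \<Rightarrow> nat \<Rightarrow> nat \<Rightarrow> 'x learner \<Rightarrow> bool" where
  "guarantees_mistakes X H l k L \<longleftrightarrow>
     (\<forall>S. valid_seq X S \<and> l_bias X H l S \<longrightarrow> mistakes L S \<le> k)"

definition labels_of :: "'x history \<Rightarrow> ('x \<times> int) list" where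
  "labels_of h = map (\<lambda>(x, p, y). (x, y)) h"

text \<open>Interaction of a deterministic learner with an adaptive adversary given by an example
rule ax (from the history) and a label rule ay (from the history, current example and prediction).\<close>
fun play :: "'x learner \<Rightarrow> ('x history \<Rightarrow> 'x) \<Rightarrow> ('x history \<Rightarrow> 'x \<Rightarrow> int option \<Rightarrow> int)
             \<Rightarrow> nat \<Rightarrow> 'x history" where
  "play L ax ay 0 = []"
| "play L ax ay (Suc n) =
     (let h = play L ax ay n; x = ax h; p = L (labels_of h) x; y = ay h x p in h @ [(x, p, y)])"

definition nontrivial_rounds :: "'x history \<Rightarrow> nat" where
  "nontrivial_rounds h =
     card {t. t < length h \<and> (fst (snd (h ! t)) = None \<or> fst (snd (h ! t)) = Some (- snd (snd (h ! t))))}"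

end

theory Submission
  imports Defs
begin

text \<open>Take \<open>\<X> = \<nat>\<close> and \<open>\<H> = {1}\<close>. In round \<open>t\<close> the adversary shows the fresh instance \<open>t\<close>
and answers \<open>-1\<close> whenever the learner predicts \<open>+1\<close>, as long as it has answered \<open>-1\<close> fewer
than \<open>l\<close> times, and \<open>+1\<close> otherwise. The negatively labelled instances form the exceptional set
of an element of \<open>\<H>\<^sup>l\<close>, so every play is \<open>l\<close>-biased. Each \<open>-1\<close> answer is a mistake, so against a
learner making at most \<open>k < l\<close> mistakes the budget of \<open>-1\<close> answers never runs out; then
predicting \<open>+1\<close> is answered by \<open>-1\<close>, predicting \<open>-1\<close> by \<open>+1\<close>, and every round is nontrivial.\<close>

lemma length_play [simp]: "length (play L ax ay n) = n"
  by (induction n) (simp_all add: Let_def)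

declare play.simps(2) [simp del]

lemma take_play: "t \<le> n \<Longrightarrow> take t (play L ax ay n) = play L ax ay t"
proof (induction n)
  case (Suc n)
  then show ?case
    by (cases "t = Suc n") (simp_all add: play.simps(2) Let_def)
qed simp

lemma nth_play:
  assumes "t < n"
  shows "play L ax ay n ! t =
    (let h = play L ax ay t; x = ax h; p = L (labels_of h) x in (x, p, ay h x p))"
proof -
  have "play L ax ay n ! t = take (Suc t) (play L ax ay n) ! t" by simp
  also have "\<dots> = play L ax ay (Suc t) ! t" using assms by (simp add: take_play)
  finally show ?thesis by (simp add: play.simps(2) Let_def nth_append)
qed

lemma length_labels_of [simp]: "length (labels_of h) = length h"
  by (simp add: labels_of_def)

lemma nth_labels_of: "t < length h \<Longrightarrow> labels_of h ! t = (fst (h ! t), snd (snd (h ! t)))"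
  by (simp add: labels_of_def case_prod_beta)

lemma take_labels_of: "take t (labels_of h) = labels_of (take t h)"
  by (simp add: labels_of_def take_map)

lemma mistakes_labels_of_play:
  "mistakes L (labels_of (play L ax ay n)) =
     card {t. t < n \<and> fst (snd (play L ax ay n ! t)) = Some (- snd (snd (play L ax ay n ! t)))}"
proof -
  have "L (take t (labels_of (play L ax ay n))) (fst (labels_of (play L ax ay n) ! t))
          = fst (snd (play L ax ay n ! t))" if "t < n" for t
    using that by (simp add: take_labels_of take_play nth_labels_of nth_play Let_def)
  then show ?thesis
    unfolding mistakes_def by (intro arg_cong[where f = card]) (auto simp: nth_labels_of)
qed

lemma l_bias_const_one:
  assumes valid: "valid_seq X S"
    and few: "card {x. (x, -1) \<in> set S} \<le> l"
    and consistent: "\<And>x. (x, -1) \<in> set S \<Longrightarrow> (x, 1) \<notin> set S"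
  shows "l_bias X {\<lambda>_. 1} l S"
proof -
  define D where "D = {x. (x, -1) \<in> set S}"
  define c :: "'a \<Rightarrow> int" where "c = (\<lambda>x. 1 - 2 * (if x \<in> D then 1 else 0))"
  have "D \<subseteq> fst ` set S" by (force simp: D_def)
  moreover have "fst ` set S \<subseteq> X" using valid by (auto simp: valid_seq_def)
  ultimately have "D \<subseteq> X" "finite D" by (auto intro: finite_subset)
  then have "c \<in> corr_class X l"
    using few unfolding corr_class_def c_def D_def by blast
  then have "hyp_prod (\<lambda>_. 1) c \<in> biased_class X {\<lambda>_. 1} l"
    unfolding biased_class_def class_prod_def by blast
  moreover have "hyp_prod (\<lambda>_. 1) c (fst (S ! t)) = snd (S ! t)" if "t < length S" for t
  proof -
    obtain x y where xy: "S ! t = (x, y)" by fastforce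
    then have mem: "(x, y) \<in> set S" using that by (metis nth_mem)
    then have "y \<in> {-1, 1}" using valid by (auto simp: valid_seq_def)
    then show ?thesis
      using mem consistent by (auto simp: xy hyp_prod_def c_def D_def)
  qed
  ultimately show ?thesis unfolding l_bias_def by blast
qed

definition negative_rounds :: "'x history \<Rightarrow> nat set" where
  "negative_rounds h = {t. t < length h \<and> snd (snd (h ! t)) = -1}"

lemma finite_negative_rounds [simp]: "finite (negative_rounds h)"
  by (simp add: negative_rounds_def)

lemma negative_rounds_take: "negative_rounds (take t h) \<subseteq> negative_rounds h"
  by (auto simp: negative_rounds_def)

definition spoiler :: "nat \<Rightarrow> 'x history \<Rightarrow> 'x \<Rightarrow> int option \<Rightarrow> int" where
  "spoiler l h x p = (if p = Some 1 \<and> card (negative_rounds h) < l then -1 else 1)"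

lemma card_negative_rounds_spoiler: "card (negative_rounds (play L ax (spoiler l) n)) \<le> l"
proof (induction n)
  case (Suc n)
  let ?h = "play L ax (spoiler l) n"
  have split: "negative_rounds (play L ax (spoiler l) (Suc n)) =
      negative_rounds ?h \<union> (if spoiler l ?h (ax ?h) (L (labels_of ?h) (ax ?h)) = -1 then {n} else {})"
    by (auto simp: negative_rounds_def play.simps(2) Let_def nth_append less_Suc_eq)
  have "spoiler l ?h (ax ?h) (L (labels_of ?h) (ax ?h)) = -1 \<Longrightarrow> card (negative_rounds ?h) < l"
    by (simp add: spoiler_def split: if_splits)
  moreover have "n \<notin> negative_rounds ?h" by (simp add: negative_rounds_def)
  ultimately show ?case
    using Suc by (cases "spoiler l ?h (ax ?h) (L (labels_of ?h) (ax ?h)) = -1")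
      (simp_all add: split card_insert_disjoint)
qed (simp add: negative_rounds_def)

lemma l_bias_spoiler:
  "valid_seq UNIV (labels_of (play L length (spoiler l) n)) \<and>
   l_bias UNIV {\<lambda>_. 1} l (labels_of (play L length (spoiler l) n))"
proof -
  let ?h = "play L length (spoiler l) n"
  define y where "y t = snd (snd (?h ! t))" for t
  have labels: "labels_of ?h = map (\<lambda>t. (t, y t)) [0..<n]"
    by (rule nth_equalityI) (simp_all add: nth_labels_of nth_play Let_def y_def)
  have y_range: "y t \<in> {-1, 1}" if "t < n" for t
    using that by (simp add: y_def nth_play Let_def spoiler_def)
  have valid: "valid_seq UNIV (labels_of ?h)"
    using y_range by (fastforce simp: labels valid_seq_def)
  have "{x. (x, -1) \<in> set (labels_of ?h)} = negative_rounds ?h"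
    by (auto simp: labels negative_rounds_def y_def)
  then have "card {x. (x, -1) \<in> set (labels_of ?h)} \<le> l"
    using card_negative_rounds_spoiler by metis
  moreover have "(x, 1) \<notin> set (labels_of ?h)" if "(x, -1) \<in> set (labels_of ?h)" for x
    using that by (auto simp: labels)
  ultimately show ?thesis
    using valid l_bias_const_one by blast
qed

lemma nontrivial_rounds_spoiler:
  assumes "valid_learner L" and few_mistakes: "mistakes L (labels_of (play L ax (spoiler l) n)) < l"
  shows "nontrivial_rounds (play L ax (spoiler l) n) = n"
proof -
  let ?h = "play L ax (spoiler l)"
  have "negative_rounds (?h n) \<subseteq>
      {t. t < n \<and> fst (snd (?h n ! t)) = Some (- snd (snd (?h n ! t)))}"
    by (auto simp: negative_rounds_def nth_play Let_def spoiler_def split: if_splits)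
  then have "card (negative_rounds (?h n)) \<le> mistakes L (labels_of (?h n))"
    by (simp add: mistakes_labels_of_play card_mono)
  then have budget: "card (negative_rounds (?h n)) < l"
    using few_mistakes by linarith
  have "fst (snd (?h n ! t)) = None \<or> fst (snd (?h n ! t)) = Some (- snd (snd (?h n ! t)))"
    if "t < n" for t
  proof -
    have "negative_rounds (?h t) \<subseteq> negative_rounds (?h n)"
      using that negative_rounds_take[of t "?h n"] by (simp add: take_play)
    then have "card (negative_rounds (?h t)) < l"
      using budget card_mono[OF finite_negative_rounds] le_less_trans by blast
    moreover have "L (labels_of (?h t)) (ax (?h t)) \<in> {None, Some 1, Some (-1)}"
      using assms(1) by (simp add: valid_learner_def)
    ultimately show ?thesis
      using that by (auto simp: nth_play Let_def spoiler_def)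
  qed
  then have "{t. t < length (?h n) \<and> (fst (snd (?h n ! t)) = None \<or>
      fst (snd (?h n ! t)) = Some (- snd (snd (?h n ! t))))} = {..<n}"
    by auto
  then show ?thesis unfolding nontrivial_rounds_def by simp
qed

theorem mainTheorem1:
  shows "\<exists>(X :: nat set) (H :: (nat \<Rightarrow> int) set).
     (\<exists>h. H = {h} \<and> (\<forall>x \<in> X. h x \<in> {-1, 1})) \<and>
     (\<forall>k l :: nat. k < l \<longrightarrow> (\<forall>m :: nat.
        \<exists>(T :: nat) (ax :: nat history \<Rightarrow> nat) (ay :: nat history \<Rightarrow> nat \<Rightarrow> int option \<Rightarrow> int).
          (\<forall>L. valid_learner L \<longrightarrow>
               valid_seq X (labels_of (play L ax ay T)) \<and> l_bias X H l (labels_of (play L ax ay T))) \<and>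
          (\<forall>L. valid_learner L \<and> guarantees_mistakes X H l k L \<longrightarrow>
               nontrivial_rounds (play L ax ay T) \<ge> m + 1)))"
proof (rule exI[of _ UNIV], rule exI[of _ "{\<lambda>_. 1}"], intro conjI allI impI)
  fix k l m :: nat
  assume "k < l"
  let ?ax = "length :: nat history \<Rightarrow> nat" and ?ay = "spoiler l"
  have "m + 1 \<le> nontrivial_rounds (play L ?ax ?ay (Suc m))"
    if "valid_learner L" "guarantees_mistakes UNIV {\<lambda>_. 1} l k L" for L
  proof -
    have "mistakes L (labels_of (play L ?ax ?ay (Suc m))) < l"
      using that(2) l_bias_spoiler \<open>k < l\<close> unfolding guarantees_mistakes_def
      by (meson le_less_trans)
    then show ?thesis using nontrivial_rounds_spoiler[OF that(1)] by simp
  qed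
  then show "\<exists>(T :: nat) (ax :: nat history \<Rightarrow> nat) (ay :: nat history \<Rightarrow> nat \<Rightarrow> int option \<Rightarrow> int).
      (\<forall>L. valid_learner L \<longrightarrow>
           valid_seq UNIV (labels_of (play L ax ay T)) \<and> l_bias UNIV {\<lambda>_. 1} l (labels_of (play L ax ay T))) \<and>
      (\<forall>L. valid_learner L \<and> guarantees_mistakes UNIV {\<lambda>_. 1} l k L \<longrightarrow>
           nontrivial_rounds (play L ax ay T) \<ge> m + 1)"
    using l_bias_spoiler by blast
qed auto

end
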